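(* If MAPTree is run without a time budget (so that its main loop exits only when $LB[r]\ge UB[r]$), its output is a minimum-cost solution graph of $\mathcal G_{\mathcal X,\mathcal Y}$.
   Context: Let $x_1,\dots,x_N\in\{0,1\}^F$ be a binary dataset $\mathcal X$ with labels $\mathcal Y\in\{0,1\}^N$, $[N]=\{1,\dots,N\}$. For $\mathcal I\subseteq[N]$, $f\in[F]$, $k\in\{0,1\}$ let $\mathcal I|_{f=k}=\{i\in\mathcal I:(x_i)_f=k\}$, $c^k(\mathcal I)=|\{i\in\mathcal I:y_i=k\}|$, $\mathcal V(\mathcal I)=\{f:\mathcal I|_{f=0}\neq\emptyset\text{ and }\mathcal I|_{f=1}\neq\emptyset\}$. Fix $\rho^1,\rho^0>0$, $\alpha\in(0,1)$, $\beta\ge0$; $\ell_{\rm leaf}(c^1,c^0)=B(c^1+\rho^1,c^0+\rho^0)/B(\rho^1,\rho^0)$ ($B$ the Beta function), $p_{\rm split}(d)=\alpha(1+d)^{-\beta}$, $p_{\rm leaf}(d,\mathcal I)=1$ if $\mathcal V(\mathcal I)=\emptyset$ else $1-p_{\rm split}(d)$, $p_{\rm inner}(d,\mathcal I)=0$ if $\mathcal V(\mathcal I)=\emptyset$ else $p_{\rm split}(d)/|\mathcal V(\mathcal I)|$; $-\log0=+\infty$, and a minimum over an empty set is $+\infty$. Graph $\mathcal G=\mathcal G_{\mathcal X,\mathcal Y}$: for nonempty $\mathcal I\subseteq[N]$, $d\in\{0,\dots,F\}$, an OR node $o_{\mathcal I,d}$ with terminal child $t_{\mathcal I,d}$ (edge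 cost $-\log p_{\rm leaf}(d,\mathcal I)-\log\ell_{\rm leaf}(c^1(\mathcal I),c^0(\mathcal I))$); for $d<F$, $f\in\mathcal V(\mathcal I)$, an AND child $a_{\mathcal I,d,f}$ (edge cost $-\log p_{\rm inner}(d,\mathcal I)$) with cost-$0$ edges to $o_{\mathcal I|_{f=0},d+1}$, $o_{\mathcal I|_{f=1},d+1}$; root $r=o_{[N],0}$; only nodes reachable from $r$ kept. A solution graph is a node set $\mathcal S\ni r$, all of whose nodes are reachable from $r$ inside $\mathcal S$, with every AND node of $\mathcal S$ having both children in $\mathcal S$ and every OR node of $\mathcal S$ exactly one child in $\mathcal S$; its cost is the sum of costs of edges $u\to v$ with $u,v\in\mathcal S$. Heuristic: $h(o_{\mathcal I,d})=-\max\{\log\ell_{\rm leaf}(c^1(\mathcal I),c^0(\mathcal I)),\log p_{\rm split}(d)+\log\ell_{\rm leaf}(c^1(\mathcal I),0)+\log\ell_{\rm leaf}(0,c^0(\mathcal I))\}$. MAPTree maintains a node set $\mathcal G'$, a set $\mathcal E$ of expanded OR nodes, and values $LB[u],UB[u]\in\mathbb R\cup\{+\infty\}$ for OR nodes ($UB[u]=+\infty$ until set); for an AND node $a$ with children $o_0,o_1$, $LB[a]=LB[o_0]+LB[o_1]$ and $UB[a]=UB[o_0]+UB[o_1]$. Initialize $\mathcal G'=\{r\}$, $\mathcal E=\emptyset$, $LB[r]=h(r)$, $UB[r]=+\infty$. While $LB[r]<UB[r]$ (and optionally while time remains): (1) $o:=r$; while $o\in\mathcal E$, choose an AND child $a^*$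 of $o$ minimizing $\mathrm{cost}(o,a)+LB[a]$, with children $o_0$ (value-0 side) and $o_1$, and set $o:=o_0$ if $UB[o_0]-LB[o_0]>UB[o_1]-LB[o_1]$, else $o:=o_1$. (2) Add $o$ to $\mathcal E$ and its terminal child to $\mathcal G'$; for each AND child $a$ of $o$ with children $o_0,o_1$, add $a,o_0,o_1$ to $\mathcal G'$ and set $LB[o_0]:=h(o_0)$, $LB[o_1]:=h(o_1)$. (3) Starting from $Q=\{o\}$, repeatedly remove from $Q$ an OR node $u$ of maximal depth, compute $v=\min\{\min_a(\mathrm{cost}(u,a)+LB[a]),\mathrm{cost}(u,t_u)\}$ over the AND children $a$ and terminal child $t_u$ of $u$; if $v>LB[u]$, set $LB[u]:=v$ and add to $Q$ every OR node of $\mathcal G'$ that is the parent of an AND node of $\mathcal G'$ having $u$ as child. (4) The same with $UB$ in place of $LB$, updating when $v<UB[u]$. Output $\mathrm{getSolution}(r)$, where for an OR node $u$ with terminal child $t$: if $u$ has no AND child or $\mathrm{cost}(u,t)\le\min_a(\mathrm{cost}(u,a)+UB[a])$, return $\{u,t\}$; else, with $a^*$ attaining the minimum and children $u_0,u_1$, return $\{u,a^*\}\cup\mathrm{getSolution}(u_0)\cup\mathrm{getSolution}(u_1)$. *)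

theory Defs
  imports "HOL-Analysis.Analysis"
begin

text \<open>Dataset: N points, F binary features. Feature value (x_i)_f is xX i f (True = 1),
  label y_i is yY i (True = 1). Points are indexed by 1..N, features by 1..F.\<close>

record inst =
  nN :: nat
  nF :: nat
  xX :: "nat \<Rightarrow> nat \<Rightarrow> bool"
  yY :: "nat \<Rightarrow> bool"
  rho1 :: real
  rho0 :: real
  alpha :: real
  beta :: real

definition restr :: "inst \<Rightarrow> nat set \<Rightarrow> nat \<Rightarrow> bool \<Rightarrow> nat set" where
  "restr P I f k = {i \<in> I. xX P i f = k}"

definition cnt :: "inst \<Rightarrow> bool \<Rightarrow> nat set \<Rightarrow> nat" where
  "cnt P k I = card {i \<in> I. yY P i = k}"

definition Vf :: "inst \<Rightarrow> nat set \<Rightarrow> nat set" where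
  "Vf P I = {f \<in> {1..nF P}. restr P I f False \<noteq> {} \<and> restr P I f True \<noteq> {}}"

definition ell :: "inst \<Rightarrow> nat \<Rightarrow> nat \<Rightarrow> real" where
  "ell P c1 c0 = Beta (real c1 + rho1 P) (real c0 + rho0 P) / Beta (rho1 P) (rho0 P)"

definition psplit :: "inst \<Rightarrow> nat \<Rightarrow> real" where
  "psplit P d = alpha P * (1 + real d) powr (- beta P)"

definition pleaf :: "inst \<Rightarrow> nat \<Rightarrow> nat set \<Rightarrow> real" where
  "pleaf P d I = (if Vf P I = {} then 1 else 1 - psplit P d)"

definition pinner :: "inst \<Rightarrow> nat \<Rightarrow> nat set \<Rightarrow> real" where
  "pinner P d I = (if Vf P I = {} then 0 else psplit P d / real (card (Vf P I)))"

definition elog :: "real \<Rightarrow> ereal" where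
  "elog p = (if p = 0 then - \<infinity> else ereal (ln p))"

datatype node = ORn "nat set" nat | TRn "nat set" nat | ANDn "nat set" nat nat

fun depth :: "node \<Rightarrow> nat" where
  "depth (ORn I d) = d" | "depth (TRn I d) = d" | "depth (ANDn I d f) = d"

fun is_OR :: "node \<Rightarrow> bool" where
  "is_OR (ORn I d) = True" | "is_OR _ = False"

fun is_AND :: "node \<Rightarrow> bool" where
  "is_AND (ANDn I d f) = True" | "is_AND _ = False"

definition root :: "inst \<Rightarrow> node" where
  "root P = ORn {1..nN P} 0"

fun ch0 :: "inst \<Rightarrow> node \<Rightarrow> node" where
  "ch0 P (ANDn I d f) = ORn (restr P I f False) (Suc d)" | "ch0 P v = v"

fun ch1 :: "inst \<Rightarrow> node \<Rightarrow> node" where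
  "ch1 P (ANDn I d f) = ORn (restr P I f True) (Suc d)" | "ch1 P v = v"

fun tchild :: "node \<Rightarrow> node" where
  "tchild (ORn I d) = TRn I d" | "tchild v = v"

text \<open>Edge relation of the graph (before restricting to nodes reachable from the root).\<close>
fun edge :: "inst \<Rightarrow> node \<Rightarrow> node \<Rightarrow> bool" where
  "edge P (ORn I d) (TRn J e) = (J = I \<and> e = d)"
| "edge P (ORn I d) (ANDn J e f) = (J = I \<and> e = d \<and> d < nF P \<and> f \<in> Vf P I)"
| "edge P (ANDn I d f) (ORn J e) =
     (e = Suc d \<and> (J = restr P I f False \<or> J = restr P I f True))"
| "edge P _ _ = False"

definition Gnodes :: "inst \<Rightarrow> node set" where
  "Gnodes P = {v. (edge P)\<^sup>*\<^sup>* (root P) v}"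

fun ecost :: "inst \<Rightarrow> node \<Rightarrow> node \<Rightarrow> ereal" where
  "ecost P (ORn I d) (TRn J e) =
     - elog (pleaf P d I) - elog (ell P (cnt P True I) (cnt P False I))"
| "ecost P (ORn I d) (ANDn J e f) = - elog (pinner P d I)"
| "ecost P _ _ = 0"

definition andch :: "inst \<Rightarrow> node \<Rightarrow> node set" where
  "andch P u = {a. edge P u a \<and> is_AND a}"

fun hh :: "inst \<Rightarrow> node \<Rightarrow> ereal" where
  "hh P (ORn I d) = - max (elog (ell P (cnt P True I) (cnt P False I)))
       (elog (psplit P d) + elog (ell P (cnt P True I) 0) + elog (ell P 0 (cnt P False I)))"
| "hh P _ = 0"

definition is_sol :: "inst \<Rightarrow> node set \<Rightarrow> bool" where
  "is_sol P S \<longleftrightarrow>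
     root P \<in> S \<and> root P \<in> Gnodes P \<and>
     (\<forall>v\<in>S. (\<lambda>u w. edge P u w \<and> u \<in> S \<and> w \<in> S)\<^sup>*\<^sup>* (root P) v) \<and>
     (\<forall>a\<in>S. is_AND a \<longrightarrow> (\<forall>w. edge P a w \<longrightarrow> w \<in> S)) \<and>
     (\<forall>u\<in>S. is_OR u \<longrightarrow> (\<exists>!w. w \<in> S \<and> edge P u w))"

definition sol_cost :: "inst \<Rightarrow> node set \<Rightarrow> ereal" where
  "sol_cost P S = (\<Sum>(u, w) \<in> {(u, w). u \<in> S \<and> w \<in> S \<and> edge P u w}. ecost P u w)"

definition is_min_sol :: "inst \<Rightarrow> node set \<Rightarrow> bool" where
  "is_min_sol P S \<longleftrightarrow> is_sol P S \<and> (\<forall>S'. is_sol P S' \<longrightarrow> sol_cost P S \<le> sol_cost P S')"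

record st =
  gp :: "node set"   \<comment> \<open>the explored graph G'\<close>
  ex :: "node set"   \<comment> \<open>expanded OR nodes E\<close>
  lb :: "node \<Rightarrow> ereal"
  ub :: "node \<Rightarrow> ereal"

definition lbA :: "inst \<Rightarrow> st \<Rightarrow> node \<Rightarrow> ereal" where
  "lbA P s a = lb s (ch0 P a) + lb s (ch1 P a)"

definition ubA :: "inst \<Rightarrow> st \<Rightarrow> node \<Rightarrow> ereal" where
  "ubA P s a = ub s (ch0 P a) + ub s (ch1 P a)"

definition gap :: "st \<Rightarrow> node \<Rightarrow> ereal" where
  "gap s u = ub s u - lb s u"

definition init :: "inst \<Rightarrow> st" where
  "init P = \<lparr>gp = {root P}, ex = {}, lb = (\<lambda>_. 0)(root P := hh P (root P)), ub = (\<lambda>_. \<infinity>)\<rparr>"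

text \<open>Step (1): descend from the root (nondeterministic tie-breaking among minimizers).\<close>
inductive walk :: "inst \<Rightarrow> st \<Rightarrow> node \<Rightarrow> node \<Rightarrow> bool" for P s where
  stop: "u \<notin> ex s \<Longrightarrow> walk P s u u"
| go: "u \<in> ex s \<Longrightarrow> a \<in> andch P u \<Longrightarrow>
     (\<forall>a'\<in>andch P u. ecost P u a + lbA P s a \<le> ecost P u a' + lbA P s a') \<Longrightarrow>
     walk P s (if gap s (ch0 P a) > gap s (ch1 P a) then ch0 P a else ch1 P a) u' \<Longrightarrow>
     walk P s u u'"

definition expand :: "inst \<Rightarrow> st \<Rightarrow> node \<Rightarrow> st" where
  "expand P s u = s\<lparr>ex := insert u (ex s),
      gp := gp s \<union> {tchild u} \<union> andch P u \<union> ch0 P ` andch P u \<union> ch1 P ` andch P u,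
      lb := (\<lambda>v. if v \<in> ch0 P ` andch P u \<union> ch1 P ` andch P u then hh P v else lb s v)\<rparr>"

definition valL :: "inst \<Rightarrow> st \<Rightarrow> node \<Rightarrow> ereal" where
  "valL P s u = min (INF a\<in>andch P u. ecost P u a + lbA P s a) (ecost P u (tchild u))"

definition valU :: "inst \<Rightarrow> st \<Rightarrow> node \<Rightarrow> ereal" where
  "valU P s u = min (INF a\<in>andch P u. ecost P u a + ubA P s a) (ecost P u (tchild u))"

definition parents :: "inst \<Rightarrow> st \<Rightarrow> node \<Rightarrow> node set" where
  "parents P s u = {ORn I d | I d f. ANDn I d f \<in> gp s \<and> ORn I d \<in> gp s \<and>
       (ch0 P (ANDn I d f) = u \<or> ch1 P (ANDn I d f) = u)}"

text \<open>Step (3): lower-bound propagation (nondeterministic among nodes of maximal depth).\<close>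
inductive propL :: "inst \<Rightarrow> st \<Rightarrow> node set \<Rightarrow> st \<Rightarrow> bool" for P where
  finish: "propL P s {} s"
| upd: "u \<in> Q \<Longrightarrow> (\<forall>w\<in>Q. depth w \<le> depth u) \<Longrightarrow>
     propL P (if valL P s u > lb s u then s\<lparr>lb := (lb s)(u := valL P s u)\<rparr> else s)
             ((Q - {u}) \<union> (if valL P s u > lb s u then parents P s u else {})) s' \<Longrightarrow>
     propL P s Q s'"

inductive propU :: "inst \<Rightarrow> st \<Rightarrow> node set \<Rightarrow> st \<Rightarrow> bool" for P where
  finish: "propU P s {} s"
| upd: "u \<in> Q \<Longrightarrow> (\<forall>w\<in>Q. depth w \<le> depth u) \<Longrightarrow>
     propU P (if valU P s u < ub s u then s\<lparr>ub := (ub s)(u := valU P s u)\<rparr> else s)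
             ((Q - {u}) \<union> (if valU P s u < ub s u then parents P s u else {})) s' \<Longrightarrow>
     propU P s Q s'"

inductive maptree_iter :: "inst \<Rightarrow> st \<Rightarrow> st \<Rightarrow> bool" for P where
  "lb s (root P) < ub s (root P) \<Longrightarrow> walk P s (root P) u \<Longrightarrow>
   propL P (expand P s u) {u} s2 \<Longrightarrow> propU P s2 {u} s3 \<Longrightarrow> maptree_iter P s s3"

text \<open>getSolution (nondeterministic choice among minimizing AND children).\<close>
inductive getsol :: "inst \<Rightarrow> st \<Rightarrow> node \<Rightarrow> node set \<Rightarrow> bool" for P s where
  leaf: "is_OR u \<Longrightarrow>
     andch P u = {} \<or> ecost P u (tchild u) \<le> (INF a\<in>andch P u. ecost P u a + ubA P s a) \<Longrightarrow>
     getsol P s u {u, tchild u}"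
| inner: "is_OR u \<Longrightarrow>
     \<not> (andch P u = {} \<or> ecost P u (tchild u) \<le> (INF a\<in>andch P u. ecost P u a + ubA P s a)) \<Longrightarrow>
     a \<in> andch P u \<Longrightarrow>
     ecost P u a + ubA P s a = (INF a'\<in>andch P u. ecost P u a' + ubA P s a') \<Longrightarrow>
     getsol P s (ch0 P a) S0 \<Longrightarrow> getsol P s (ch1 P a) S1 \<Longrightarrow>
     getsol P s u ({u, a} \<union> S0 \<union> S1)"

end

theory Submission
  imports Defs
begin

text \<open>
  MAPTree is AO* search on the AND/OR graph of decision trees, so the proof is the classical
  admissibility argument. The two children of an AND node split its sample set into disjoint
  nonempty parts, so solution graphs are trees whose cost decomposes recursively; the least cost
  of a solution below an OR node is therefore the fixed point \<open>opt\<close> of the Bellman backup.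
  Along the run, \<open>LB \<le> opt\<close> holds pointwise because backups are monotone and the heuristic
  is a lower bound on \<open>opt\<close>, which rests on two inequalities for the Beta function:
  \<open>B(x+a,y+b) B(x,y) \<le> B(x+a,y) B(x,y+b)\<close> and log-convexity in each argument along integer
  shifts. Also \<open>backup(UB) \<le> UB\<close> holds pointwise, so getSolution returns a solution tree of
  cost at most \<open>UB[r]\<close>. When the loop stops, \<open>UB[r] \<le> LB[r] \<le> opt(r)\<close>.
\<close>

section \<open>Inequalities for the Beta function\<close>

lemma Beta_real_pos: "0 < x \<Longrightarrow> 0 < y \<Longrightarrow> 0 < Beta x (y::real)"
  by (simp add: Beta_def)

lemma Beta_plus1_left_real:
  fixes x y :: real
  assumes "0 < x" "0 < y"
  shows "Beta (x + 1) y = Beta x y * (x / (x + y))"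
proof -
  have "x \<notin> \<int>\<^sub>\<le>\<^sub>0" using assms(1) by (auto elim!: nonpos_Ints_cases)
  then show ?thesis using Beta_plus1_left[of x y] assms by (simp add: field_simps)
qed

lemma Beta_plus_Suc_left:
  fixes x y :: real
  assumes "0 < x" "0 < y"
  shows "Beta (x + real (Suc n)) y = Beta (x + n) y * ((x + n) / (x + n + y))"
proof -
  have "Beta (x + real (Suc n)) y = Beta ((x + n) + 1) y" by (simp add: ac_simps)
  also have "\<dots> = Beta (x + n) y * ((x + n) / (x + n + y))"
    using assms by (intro Beta_plus1_left_real) auto
  finally show ?thesis .
qed

lemma Beta_plus_Suc_right:
  fixes x y :: real
  assumes "0 < x" "0 < y"
  shows "Beta x (y + real (Suc n)) = Beta x (y + n) * ((y + n) / (x + (y + n)))"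
  using Beta_plus_Suc_left[OF assms(2,1), of n] by (metis Beta_commute add.commute)

lemma Beta_plus_nat_antimono_left:
  fixes x y :: real
  assumes "0 < x" "0 < y" "m \<le> n"
  shows "Beta (x + real n) y \<le> Beta (x + real m) y"
  using assms(3)
proof (induction n rule: dec_induct)
  case (step n)
  have "Beta (x + real (Suc n)) y = Beta (x + real n) y * ((x + n) / (x + n + y))"
    by (rule Beta_plus_Suc_left[OF assms(1,2)])
  also have "\<dots> \<le> Beta (x + real n) y"
    using assms Beta_real_pos[of "x + n" y] by (intro mult_left_le) auto
  finally show ?case using step.IH by linarith
qed simp

lemma Beta_plus_nat_le:
  fixes x y :: real
  assumes "0 < x" "0 < y"
  shows "Beta (x + real a) (y + real b) \<le> Beta x y"
proof -
  have "Beta (x + real a) (y + real b) \<le> Beta x (y + real b)"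
    using Beta_plus_nat_antimono_left[of x "y + b" 0 a] assms by simp
  also have "\<dots> = Beta (y + real b) x" by (rule Beta_commute)
  also have "\<dots> \<le> Beta y x"
    using Beta_plus_nat_antimono_left[of y x 0 b] assms by simp
  finally show ?thesis by (simp add: Beta_commute)
qed

lemma Beta_plus_nat_supermodular:
  fixes x y :: real
  assumes "0 < x" "0 < y"
  shows "Beta (x + real a) (y + real b) * Beta x y \<le> Beta (x + real a) y * Beta x (y + real b)"
proof (induction b)
  case (Suc b)
  have step: "Beta x' (y + real (Suc b)) = Beta x' (y + b) * ((y + b) / (x' + (y + b)))"
    if "0 < x'" for x'
    using Beta_plus_Suc_right that assms(2) .
  have ratio: "(y + b) / (x + a + (y + b)) \<le> (y + b) / (x + (y + b))"
    using assms by (simp add: divide_mono)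
  have "Beta (x + a) (y + real (Suc b)) * Beta x y
      = (Beta (x + a) (y + b) * Beta x y) * ((y + b) / (x + a + (y + b)))"
    using step[of "x + a"] assms by simp
  also have "\<dots> \<le> (Beta (x + a) y * Beta x (y + b)) * ((y + b) / (x + (y + b)))"
    by (rule mult_mono[OF Suc.IH ratio])
      (use assms in \<open>auto intro!: mult_nonneg_nonneg less_imp_le[OF Beta_real_pos]\<close>)
  also have "\<dots> = Beta (x + a) y * Beta x (y + real (Suc b))"
    using step[of x] assms by simp
  finally show ?case .
qed simp

lemma Beta_plus_nat_log_convex_left:
  fixes x y :: real
  assumes "0 < x" "0 < y"
  shows "Beta (x + real a) y * Beta (x + real b) y \<le> Beta (x + real (a + b)) y * Beta x y"
proof (induction b)
  case (Suc b)
  note step = Beta_plus_Suc_left[OF assms]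
  have ratio: "(x + b) / (x + b + y) \<le> (x + real (a + b)) / (x + real (a + b) + y)"
    using assms by (simp add: divide_simps) (simp add: algebra_simps)
  have "Beta (x + a) y * Beta (x + real (Suc b)) y
      = (Beta (x + a) y * Beta (x + b) y) * ((x + b) / (x + b + y))"
    unfolding step by (simp only: mult.assoc)
  also have "\<dots> \<le> (Beta (x + real (a + b)) y * Beta x y) * ((x + real (a + b)) / (x + real (a + b) + y))"
    by (rule mult_mono[OF Suc.IH ratio])
      (use assms in \<open>auto intro!: mult_nonneg_nonneg less_imp_le[OF Beta_real_pos]\<close>)
  also have "\<dots> = Beta (x + real (a + Suc b)) y * Beta x y"
    using step[of "a + b"] by simp
  finally show ?case .
qed simp

lemma Beta_plus_nat_mult_le:
  fixes x y :: real
  assumes "0 < x" "0 < y" "c \<le> a + b"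
  shows "Beta (x + real a) y * Beta (x + real b) y \<le> Beta (x + real c) y * Beta x y"
proof -
  have "Beta (x + real (a + b)) y * Beta x y \<le> Beta (x + real c) y * Beta x y"
    using Beta_plus_nat_antimono_left[OF assms] Beta_real_pos[OF assms(1,2)]
    by (intro mult_right_mono) auto
  then show ?thesis using Beta_plus_nat_log_convex_left[OF assms(1,2), of a b] by linarith
qed

lemma andch_ORn: "andch P (ORn I d) = (if d < nF P then ANDn I d ` Vf P I else {})"
proof -
  have "a \<in> andch P (ORn I d) \<longleftrightarrow> a \<in> (if d < nF P then ANDn I d ` Vf P I else {})" for a
    by (cases a) (auto simp: andch_def)
  then show ?thesis by blast
qed

lemma andch_not_OR: "\<not> is_OR u \<Longrightarrow> andch P u = {}"
  by (cases u) (auto simp: andch_def elim: edge.elims)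

fun samples :: "node \<Rightarrow> nat set" where
  "samples (ORn I d) = I" | "samples (TRn I d) = I" | "samples (ANDn I d f) = I"

lemma edge_samples_subset: "edge P x y \<Longrightarrow> samples y \<subseteq> samples x"
  by (induction P x y rule: edge.induct) (auto simp: restr_def)

lemma edge_ORn_samples: "edge P (ORn I d) w \<Longrightarrow> samples w = I"
  by (cases w) auto

lemma edge_ANDn: "edge P (ANDn I d f) w \<Longrightarrow> w = ch0 P (ANDn I d f) \<or> w = ch1 P (ANDn I d f)"
  by (cases w) auto

lemma andchE:
  assumes "a \<in> andch P u"
  obtains I d f where "u = ORn I d" "a = ANDn I d f" "d < nF P" "f \<in> Vf P I"
proof (cases u)
  case (ORn I d)
  then show ?thesis using assms that by (auto simp: andch_ORn split: if_splits)
qed (use assms andch_not_OR in auto)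

lemma andch_samples:
  assumes "a \<in> andch P u"
  shows "samples a = samples u" "samples (ch0 P a) \<union> samples (ch1 P a) = samples u"
    "samples (ch0 P a) \<inter> samples (ch1 P a) = {}"
    "samples (ch0 P a) \<noteq> {}" "samples (ch1 P a) \<noteq> {}"
  using assms by (auto elim!: andchE simp: restr_def Vf_def)

section \<open>Solution graphs are trees\<close>

inductive sol_tree :: "inst \<Rightarrow> node \<Rightarrow> node set \<Rightarrow> bool" for P where
  leaf: "is_OR u \<Longrightarrow> sol_tree P u {u, tchild u}"
| split: "a \<in> andch P u \<Longrightarrow> sol_tree P (ch0 P a) T0 \<Longrightarrow> sol_tree P (ch1 P a) T1 \<Longrightarrow>
    sol_tree P u ({u, a} \<union> T0 \<union> T1)"

lemma sol_tree_finite: "sol_tree P u T \<Longrightarrow> finite T"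
  by (induction rule: sol_tree.induct) auto

lemma sol_tree_root_mem: "sol_tree P u T \<Longrightarrow> u \<in> T"
  by (induction rule: sol_tree.induct) auto

lemma sol_tree_samples:
  "sol_tree P u T \<Longrightarrow> y \<in> T \<Longrightarrow>
    samples y \<subseteq> samples u \<and> (samples u \<noteq> {} \<longrightarrow> samples y \<noteq> {})"
proof (induction arbitrary: y rule: sol_tree.induct)
  case (leaf u)
  then show ?case by (cases u) auto
next
  case (split a u T0 T1)
  note s = andch_samples[OF split.hyps(1)]
  consider "y = u" | "y = a" | "y \<in> T0" | "y \<in> T1" using split.prems by blast
  then show ?case
  proof cases
    case 1
    then show ?thesis by simp
  next
    case 2
    then show ?thesis using s(1) by simp
  next
    case 3
    then show ?thesis using split.IH(1)[OF 3] s(2,4) by auto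
  next
    case 4
    then show ?thesis using split.IH(2)[OF 4] s(2,5) by auto
  qed
qed

lemma sol_tree_split_branches:
  assumes "a \<in> andch P u" "sol_tree P (ch0 P a) T0" "sol_tree P (ch1 P a) T1"
    and "w \<in> {u, a} \<union> T0 \<union> T1"
  shows "w \<in> T0 \<longleftrightarrow> samples w \<subseteq> samples (ch0 P a)"
    and "w \<in> T1 \<longleftrightarrow> samples w \<subseteq> samples (ch1 P a)"
proof -
  note s = andch_samples[OF assms(1)]
  have T0: "samples y \<subseteq> samples (ch0 P a) \<and> samples y \<noteq> {}" if "y \<in> T0" for y
    using sol_tree_samples[OF assms(2) that] s(4) by simp
  have T1: "samples y \<subseteq> samples (ch1 P a) \<and> samples y \<noteq> {}" if "y \<in> T1" for y
    using sol_tree_samples[OF assms(3) that] s(5) by simp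
  have "\<not> samples u \<subseteq> samples (ch0 P a)" "\<not> samples u \<subseteq> samples (ch1 P a)"
    using s(2-5) by blast+
  then have "\<not> samples v \<subseteq> samples (ch0 P a)" "\<not> samples v \<subseteq> samples (ch1 P a)"
    if "v = u \<or> v = a" for v
    using that s(1) by auto
  moreover have "\<not> samples y \<subseteq> samples (ch0 P a)" if "y \<in> T1" for y
    using T1[OF that] s(3) by blast
  moreover have "\<not> samples y \<subseteq> samples (ch1 P a)" if "y \<in> T0" for y
    using T0[OF that] s(3) by blast
  ultimately show "w \<in> T0 \<longleftrightarrow> samples w \<subseteq> samples (ch0 P a)"
    and "w \<in> T1 \<longleftrightarrow> samples w \<subseteq> samples (ch1 P a)"
    using assms(4) T0 T1 by blast+
qed

lemma sol_tree_split_disjoint: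
  assumes "a \<in> andch P u" "sol_tree P (ch0 P a) T0" "sol_tree P (ch1 P a) T1"
  shows "u \<notin> T0 \<union> T1" "a \<notin> T0 \<union> T1" "T0 \<inter> T1 = {}"
proof -
  note branch = sol_tree_split_branches[OF assms]
  note s = andch_samples[OF assms(1)]
  have "\<not> samples u \<subseteq> samples (ch0 P a)" "\<not> samples u \<subseteq> samples (ch1 P a)"
    using s(2-5) by blast+
  then show "u \<notin> T0 \<union> T1" "a \<notin> T0 \<union> T1"
    using branch[of u] branch[of a] s(1) by auto
  have "samples y \<noteq> {}" if "y \<in> T0" for y
    using sol_tree_samples[OF assms(2) that] s(4) by simp
  then show "T0 \<inter> T1 = {}"
    using branch s(3) by blast
qed

lemma sol_tree_split_child:
  assumes "a \<in> andch P u" "sol_tree P (ch0 P a) T0" "sol_tree P (ch1 P a) T1"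
    and "w \<in> {u, a} \<union> T0 \<union> T1" "edge P x w"
  shows "x = u \<Longrightarrow> w = a" and "x \<in> T0 \<Longrightarrow> w \<in> T0" and "x \<in> T1 \<Longrightarrow> w \<in> T1"
proof -
  note branch = sol_tree_split_branches[OF assms(1-3)]
  note shrink = edge_samples_subset[OF assms(5)]
  show "w = a" if "x = u"
  proof -
    obtain I d f where u: "u = ORn I d" using assms(1) by (rule andchE)
    then have "samples w = samples u" using assms(5) that edge_ORn_samples by simp
    then have "w \<in> T0 \<longleftrightarrow> u \<in> T0" "w \<in> T1 \<longleftrightarrow> u \<in> T1"
      using branch[OF assms(4)] branch[of u] by simp_all
    moreover have "w \<noteq> u" using assms(5) that u by auto
    ultimately show ?thesis
      using assms(4) sol_tree_split_disjoint(1)[OF assms(1-3)] by blast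
  qed
  show "w \<in> T0" if "x \<in> T0"
  proof -
    have "samples x \<subseteq> samples (ch0 P a)" using branch(1)[of x] that by simp
    then show ?thesis using branch(1)[OF assms(4)] shrink by blast
  qed
  show "w \<in> T1" if "x \<in> T1"
  proof -
    have "samples x \<subseteq> samples (ch1 P a)" using branch(2)[of x] that by simp
    then show ?thesis using branch(2)[OF assms(4)] shrink by blast
  qed
qed

definition sol_edges :: "inst \<Rightarrow> node set \<Rightarrow> (node \<times> node) set" where
  "sol_edges P S = {(u, w). u \<in> S \<and> w \<in> S \<and> edge P u w}"

lemma sol_cost_eq: "sol_cost P S = (\<Sum>(u, w)\<in>sol_edges P S. ecost P u w)"
  unfolding sol_cost_def sol_edges_def ..

lemma sol_edges_finite: "finite S \<Longrightarrow> finite (sol_edges P S)"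
  unfolding sol_edges_def by (rule finite_subset[of _ "S \<times> S"]) auto

lemma sol_cost_leaf: "is_OR u \<Longrightarrow> sol_cost P {u, tchild u} = ecost P u (tchild u)"
proof -
  assume "is_OR u"
  then have "sol_edges P {u, tchild u} = {(u, tchild u)}"
    by (cases u) (auto simp: sol_edges_def elim: edge.elims)
  then show ?thesis by (simp add: sol_cost_eq)
qed

lemma sol_edges_split:
  assumes "a \<in> andch P u" "sol_tree P (ch0 P a) T0" "sol_tree P (ch1 P a) T1"
  shows "sol_edges P ({u, a} \<union> T0 \<union> T1) =
    insert (u, a) (insert (a, ch0 P a) (insert (a, ch1 P a) (sol_edges P T0 \<union> sol_edges P T1)))"
    (is "sol_edges P ?T = ?E")
proof -
  obtain I d f where a: "a = ANDn I d f" using assms(1) by (rule andchE)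
  have "e \<in> ?E" if e_in: "e \<in> sol_edges P ?T" for e
  proof -
    obtain x w where e: "e = (x, w)" "x \<in> ?T" "w \<in> ?T" "edge P x w"
      using e_in by (auto simp: sol_edges_def)
    note child = sol_tree_split_child[OF assms e(3,4)]
    consider "x = u" | "x = a" | "x \<in> T0" | "x \<in> T1" using e(2) by blast
    then show ?thesis
    proof cases
      case 1
      then show ?thesis using child(1) e(1) by simp
    next
      case 2
      then show ?thesis using edge_ANDn[of P I d f w] e(1,4) a by auto
    qed (use child(2,3) e in \<open>auto simp: sol_edges_def\<close>)
  qed
  moreover have "edge P u a" "edge P a (ch0 P a)" "edge P a (ch1 P a)"
    using assms(1) a by (simp_all add: andch_def)
  moreover have "ch0 P a \<in> T0" "ch1 P a \<in> T1"
    using assms(2,3) by (auto intro: sol_tree_root_mem)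
  ultimately show ?thesis by (auto simp: sol_edges_def)
qed

lemma sol_cost_split:
  assumes "a \<in> andch P u" "sol_tree P (ch0 P a) T0" "sol_tree P (ch1 P a) T1"
  shows "sol_cost P ({u, a} \<union> T0 \<union> T1) = ecost P u a + (sol_cost P T0 + sol_cost P T1)"
proof -
  obtain I d f where u: "u = ORn I d" and a: "a = ANDn I d f" using assms(1) by (rule andchE)
  let ?c = "\<lambda>(x, y). ecost P x y" and ?E0 = "sol_edges P T0" and ?E1 = "sol_edges P T1"
  note disjoint = sol_tree_split_disjoint[OF assms]
  have fin: "finite ?E0" "finite ?E1"
    using assms(2,3) by (auto intro: sol_edges_finite sol_tree_finite)
  have "(u, a) \<notin> insert (a, ch0 P a) (insert (a, ch1 P a) (?E0 \<union> ?E1))"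
    using disjoint u a unfolding sol_edges_def by auto
  then have "sol_cost P ({u, a} \<union> T0 \<union> T1) =
      ecost P u a + sum ?c (insert (a, ch0 P a) (insert (a, ch1 P a) (?E0 \<union> ?E1)))"
    unfolding sol_cost_eq sol_edges_split[OF assms] using fin by simp
  also have "sum ?c (insert (a, ch0 P a) (insert (a, ch1 P a) (?E0 \<union> ?E1))) = sum ?c (?E0 \<union> ?E1)"
    using fin a by (simp add: sum.insert_if)
  also have "\<dots> = sol_cost P T0 + sol_cost P T1"
    unfolding sol_cost_eq using fin disjoint(3)
    by (intro sum.union_disjoint) (auto simp: sol_edges_def)
  finally show ?thesis .
qed

definition edge_in :: "inst \<Rightarrow> node set \<Rightarrow> node \<Rightarrow> node \<Rightarrow> bool" where
  "edge_in P S u w \<longleftrightarrow> edge P u w \<and> u \<in> S \<and> w \<in> S"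

definition sol_graph :: "inst \<Rightarrow> node \<Rightarrow> node set \<Rightarrow> bool" where
  "sol_graph P r S \<longleftrightarrow>
     r \<in> S \<and> (\<forall>v\<in>S. (edge_in P S)\<^sup>*\<^sup>* r v) \<and>
     (\<forall>a\<in>S. is_AND a \<longrightarrow> (\<forall>w. edge P a w \<longrightarrow> w \<in> S)) \<and>
     (\<forall>u\<in>S. is_OR u \<longrightarrow> (\<exists>!w. w \<in> S \<and> edge P u w))"

lemma is_sol_iff_sol_graph: "is_sol P S \<longleftrightarrow> sol_graph P (root P) S"
proof -
  have "(\<lambda>u w. edge P u w \<and> u \<in> S \<and> w \<in> S) = edge_in P S"
    by (intro ext) (simp add: edge_in_def)
  then show ?thesis unfolding is_sol_def sol_graph_def Gnodes_def by simp
qed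

lemma edge_in_rtranclp_mono:
  "S \<subseteq> S' \<Longrightarrow> (edge_in P S)\<^sup>*\<^sup>* x y \<Longrightarrow> (edge_in P S')\<^sup>*\<^sup>* x y"
  by (rule rtranclp_mono[THEN predicate2D, rotated]) (auto simp: edge_in_def)

lemma sol_graph_leaf: "is_OR u \<Longrightarrow> sol_graph P u {u, tchild u}"
  by (cases u) (auto simp: sol_graph_def edge_in_def elim: edge.elims)

lemma sol_graph_split_reachable:
  assumes "a \<in> andch P u" "sol_graph P (ch0 P a) T0" "sol_graph P (ch1 P a) T1"
  shows "\<forall>v\<in>{u, a} \<union> T0 \<union> T1. (edge_in P ({u, a} \<union> T0 \<union> T1))\<^sup>*\<^sup>* u v"
    (is "\<forall>v\<in>?T. _")
proof
  fix v assume "v \<in> ?T"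
  obtain I d f where a: "a = ANDn I d f" using assms(1) by (rule andchE)
  have ua: "edge_in P ?T u a" and ac: "edge_in P ?T a (ch0 P a)" "edge_in P ?T a (ch1 P a)"
    using assms a by (auto simp: edge_in_def andch_def sol_graph_def)
  have "(edge_in P ?T)\<^sup>*\<^sup>* (ch0 P a) v" if "v \<in> T0"
    using assms(2) that edge_in_rtranclp_mono[of T0 ?T] by (auto simp: sol_graph_def)
  moreover have "(edge_in P ?T)\<^sup>*\<^sup>* (ch1 P a) v" if "v \<in> T1"
    using assms(3) that edge_in_rtranclp_mono[of T1 ?T] by (auto simp: sol_graph_def)
  ultimately show "(edge_in P ?T)\<^sup>*\<^sup>* u v"
    using \<open>v \<in> ?T\<close> ua ac by (blast intro: converse_rtranclp_into_rtranclp)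
qed

lemma sol_graph_split:
  assumes "a \<in> andch P u" "sol_tree P (ch0 P a) T0" "sol_tree P (ch1 P a) T1"
    and "sol_graph P (ch0 P a) T0" "sol_graph P (ch1 P a) T1"
  shows "sol_graph P u ({u, a} \<union> T0 \<union> T1)" (is "sol_graph P u ?T")
proof -
  obtain I d f where u: "u = ORn I d" and a: "a = ANDn I d f" using assms(1) by (rule andchE)
  note child = sol_tree_split_child[OF assms(1-3)]
  have ua: "edge_in P ?T u a" and ac: "edge_in P ?T a (ch0 P a)" "edge_in P ?T a (ch1 P a)"
    using assms(1,4,5) a by (auto simp: edge_in_def andch_def sol_graph_def)
  have and_closed: "\<forall>x\<in>?T. is_AND x \<longrightarrow> (\<forall>w. edge P x w \<longrightarrow> w \<in> ?T)"
  proof (intro ballI impI allI)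
    fix x w assume x: "x \<in> ?T" "is_AND x" and "edge P x w"
    have "x = a \<or> x \<in> T0 \<or> x \<in> T1" using x u by auto
    then show "w \<in> ?T"
      using x(2) \<open>edge P x w\<close> ac assms(4,5) unfolding edge_in_def sol_graph_def
      by (metis Un_iff a edge_ANDn)
  qed
  have or_unique: "\<forall>x\<in>?T. is_OR x \<longrightarrow> (\<exists>!w. w \<in> ?T \<and> edge P x w)"
  proof (intro ballI impI)
    fix x assume x: "x \<in> ?T" "is_OR x"
    have unique_in: "\<exists>!w. w \<in> B \<and> edge P x w" if "sol_graph P r B" "x \<in> B" for r B
      using that x(2) unfolding sol_graph_def by blast
    consider "x = u" | "x \<in> T0" | "x \<in> T1" using x a by auto
    then show "\<exists>!w. w \<in> ?T \<and> edge P x w"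
    proof cases
      case 1
      show ?thesis
        using ua child(1) unfolding 1 edge_in_def by (intro ex1I[of _ a]) auto
    next
      case 2
      then show ?thesis using unique_in[OF assms(4) 2] child(2) by blast
    next
      case 3
      then show ?thesis using unique_in[OF assms(5) 3] child(3) by blast
    qed
  qed
  show ?thesis
    unfolding sol_graph_def using sol_graph_split_reachable[OF assms(1,4,5)] and_closed or_unique
    by simp
qed

lemma sol_tree_sol_graph: "sol_tree P u T \<Longrightarrow> sol_graph P u T"
proof (induction rule: sol_tree.induct)
  case (leaf u)
  then show ?case by (rule sol_graph_leaf)
next
  case (split a u T0 T1)
  then show ?case by (intro sol_graph_split)
qed

lemma sol_tree_within:
  assumes and_closed: "\<forall>a\<in>S. is_AND a \<longrightarrow> (\<forall>w. edge P a w \<longrightarrow> w \<in> S)"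
    and or_child: "\<forall>x\<in>S. is_OR x \<longrightarrow> (\<exists>w\<in>S. edge P x w)"
    and "u \<in> S" "is_OR u"
  shows "\<exists>T\<subseteq>S. sol_tree P u T"
  using assms(3,4)
proof (induction "nF P - depth u" arbitrary: u rule: less_induct)
  case less
  obtain I d where u: "u = ORn I d" using less.prems(2) by (cases u) auto
  obtain w where "w \<in> S" "edge P u w" using or_child less.prems by blast
  then show ?case
  proof (cases w)
    case (TRn J e)
    then have "{u, tchild u} \<subseteq> S" using \<open>w \<in> S\<close> \<open>edge P u w\<close> less.prems(1) u by simp
    then show ?thesis using sol_tree.leaf[OF less.prems(2)] by blast
  next
    case (ANDn J e f)
    then have a: "w \<in> andch P u" "d < nF P" using \<open>edge P u w\<close> u by (auto simp: andch_def)
    have in_S: "ch0 P w \<in> S" "ch1 P w \<in> S" and is_OR: "is_OR (ch0 P w)" "is_OR (ch1 P w)"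
      using and_closed \<open>w \<in> S\<close> \<open>edge P u w\<close> ANDn u by auto
    have deeper: "nF P - depth (ch0 P w) < nF P - depth u" "nF P - depth (ch1 P w) < nF P - depth u"
      using a(2) \<open>edge P u w\<close> ANDn u by auto
    obtain T0 where "T0 \<subseteq> S" "sol_tree P (ch0 P w) T0"
      using less.hyps[OF deeper(1) in_S(1) is_OR(1)] by blast
    moreover obtain T1 where "T1 \<subseteq> S" "sol_tree P (ch1 P w) T1"
      using less.hyps[OF deeper(2) in_S(2) is_OR(2)] by blast
    ultimately have "{u, w} \<union> T0 \<union> T1 \<subseteq> S" "sol_tree P u ({u, w} \<union> T0 \<union> T1)"
      using sol_tree.split[OF a(1)] \<open>w \<in> S\<close> less.prems(1) by auto
    then show ?thesis by blast
  qed (use \<open>edge P u w\<close> u in auto)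
qed

lemma sol_graph_eq_sol_tree:
  assumes "sol_graph P u S" "sol_tree P u T" "T \<subseteq> S"
  shows "S = T"
proof
  note tree = sol_tree_sol_graph[OF assms(2), unfolded sol_graph_def]
  have "v \<in> T" if "(edge_in P S)\<^sup>*\<^sup>* u v" for v
    using that
  proof (induction rule: rtranclp_induct)
    case base
    then show ?case using tree by simp
  next
    case (step x y)
    then have "edge P x y" "y \<in> S" by (auto simp: edge_in_def)
    show ?case
    proof (cases x)
      case (ORn I d)
      then obtain w where "w \<in> T" "edge P x w" using tree step.IH by auto
      then show ?thesis using assms(1,3) \<open>edge P x y\<close> \<open>y \<in> S\<close> step.IH ORn
        unfolding sol_graph_def by (metis in_mono is_OR.simps(1))
    next
      case (ANDn I d f)
      then show ?thesis using tree step.IH \<open>edge P x y\<close> by auto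
    qed (use \<open>edge P x y\<close> in auto)
  qed
  then show "S \<subseteq> T" using assms(1) unfolding sol_graph_def by blast
qed (rule assms(3))

lemma sol_graph_iff_sol_tree: "is_OR u \<Longrightarrow> sol_graph P u S \<longleftrightarrow> sol_tree P u S"
proof
  assume "is_OR u" "sol_graph P u S"
  moreover from this obtain T where "T \<subseteq> S" "sol_tree P u T"
    using sol_tree_within[of S P u] unfolding sol_graph_def by blast
  ultimately show "sol_tree P u S" using sol_graph_eq_sol_tree by blast
qed (rule sol_tree_sol_graph)

lemma is_sol_iff_sol_tree: "is_sol P S \<longleftrightarrow> sol_tree P (root P) S"
  unfolding is_sol_iff_sol_graph root_def by (simp add: sol_graph_iff_sol_tree)

section \<open>Optimal costs and backups\<close>

definition backup :: "inst \<Rightarrow> (node \<Rightarrow> ereal) \<Rightarrow> node \<Rightarrow> ereal" where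
  "backup P v u =
     min (INF a\<in>andch P u. ecost P u a + (v (ch0 P a) + v (ch1 P a))) (ecost P u (tchild u))"

lemma valL_eq_backup: "valL P s = backup P (lb s)"
  unfolding valL_def backup_def lbA_def ..

lemma valU_eq_backup: "valU P s = backup P (ub s)"
  unfolding valU_def backup_def ubA_def ..

lemma backup_mono: "(\<And>x. v x \<le> w x) \<Longrightarrow> backup P v u \<le> backup P w u"
  unfolding backup_def by (intro min.mono INF_mono' add_mono order_refl)

function opt_cost :: "inst \<Rightarrow> node \<Rightarrow> ereal" where
  "opt_cost P (ORn I d) =
     min (if d < nF P
          then INF f\<in>Vf P I. ecost P (ORn I d) (ANDn I d f) +
            (opt_cost P (ORn (restr P I f False) (Suc d)) + opt_cost P (ORn (restr P I f True) (Suc d)))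
          else \<infinity>)
       (ecost P (ORn I d) (TRn I d))"
| "opt_cost P (TRn I d) = 0"
| "opt_cost P (ANDn I d f) = 0"
  by pat_completeness auto
termination by (relation "measures [\<lambda>(P, u). nF P - depth u]") auto

declare opt_cost.simps(1) [simp del]

lemma opt_cost_backup: "opt_cost P u = backup P (opt_cost P) u"
proof (cases u)
  case (ORn I d)
  then show ?thesis
    by (simp add: opt_cost.simps(1)[of P I d] backup_def andch_ORn image_image)
qed (simp_all add: backup_def andch_not_OR)

lemma opt_cost_le_sol_cost: "sol_tree P u T \<Longrightarrow> opt_cost P u \<le> sol_cost P T"
proof (induction rule: sol_tree.induct)
  case (leaf u)
  have "opt_cost P u \<le> ecost P u (tchild u)"
    by (subst opt_cost_backup) (simp add: backup_def)
  then show ?case using sol_cost_leaf[OF leaf] by simp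
next
  case (split a u T0 T1)
  have "opt_cost P u \<le> ecost P u a + (opt_cost P (ch0 P a) + opt_cost P (ch1 P a))"
    by (subst opt_cost_backup)
      (use split.hyps(1) in \<open>auto simp: backup_def intro: min.coboundedI1 INF_lower\<close>)
  also have "\<dots> \<le> ecost P u a + (sol_cost P T0 + sol_cost P T1)"
    using split.IH by (intro add_mono order_refl)
  finally show ?case using sol_cost_split[OF split.hyps] by simp
qed

lemma getsol_sol_tree: "getsol P s u S \<Longrightarrow> sol_tree P u S"
proof (induction rule: getsol.induct)
  case (leaf u)
  show ?case by (rule sol_tree.leaf[OF leaf(1)])
next
  case (inner u a S0 S1)
  show ?case by (rule sol_tree.split[OF inner.hyps(3) inner.IH])
qed

lemma getsol_cost_le_backup:
  assumes "getsol P s u S" and ub_valid: "\<And>x. backup P (ub s) x \<le> ub s x"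
  shows "sol_cost P S \<le> backup P (ub s) u"
  using assms(1)
proof (induction rule: getsol.induct)
  case (leaf u)
  then have "ecost P u (tchild u) \<le> (INF a\<in>andch P u. ecost P u a + ubA P s a)"
    by auto
  then have "backup P (ub s) u = ecost P u (tchild u)"
    unfolding backup_def ubA_def by (simp add: min.absorb2)
  then show ?case using sol_cost_leaf[OF leaf(1)] by simp
next
  case (inner u a S0 S1)
  have "sol_cost P ({u, a} \<union> S0 \<union> S1) = ecost P u a + (sol_cost P S0 + sol_cost P S1)"
    using inner.hyps(3,5,6) getsol_sol_tree by (intro sol_cost_split) auto
  also have "\<dots> \<le> ecost P u a + ubA P s a"
    unfolding ubA_def using order_trans[OF inner.IH(1) ub_valid] order_trans[OF inner.IH(2) ub_valid]
    by (intro add_mono order_refl)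
  also have "\<dots> = backup P (ub s) u"
  proof -
    have "(INF a\<in>andch P u. ecost P u a + ubA P s a) \<le> ecost P u (tchild u)"
      using inner.hyps(2) by (simp add: not_le less_imp_le)
    then show ?thesis using inner.hyps(4) unfolding backup_def ubA_def by (simp add: min.absorb1)
  qed
  finally show ?case .
qed

section \<open>Admissibility of the heuristic\<close>

lemma Vf_finite: "finite (Vf P I)"
  unfolding Vf_def by simp

(* Only an inequality: I may be infinite, and then card gives 0. *)
lemma cnt_le_restr: "cnt P k I \<le> cnt P k (restr P I f False) + cnt P k (restr P I f True)"
proof -
  have "{i \<in> I. yY P i = k} =
      {i \<in> restr P I f False. yY P i = k} \<union> {i \<in> restr P I f True. yY P i = k}"
    by (auto simp: restr_def)
  then show ?thesis unfolding cnt_def by (simp only: card_Un_le)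
qed

lemma elog_pos: "0 < p \<Longrightarrow> elog p = ereal (ln p)"
  by (simp add: elog_def)

(* Cost of putting the positive and the negative points of I into two separate pure leaves;
   up to -log p_split it is the second alternative of the heuristic h. *)
definition pure_cost :: "inst \<Rightarrow> nat set \<Rightarrow> real" where
  "pure_cost P I = - ln (ell P (cnt P True I) 0) - ln (ell P 0 (cnt P False I))"

locale maptree_params =
  fixes P :: inst
  assumes rho1_pos: "0 < rho1 P" and rho0_pos: "0 < rho0 P"
    and alpha_pos: "0 < alpha P" and alpha_less_1: "alpha P < 1" and beta_nonneg: "0 \<le> beta P"
begin

lemma ell_eq: "ell P a b = Beta (rho1 P + real a) (rho0 P + real b) / Beta (rho1 P) (rho0 P)"
  unfolding ell_def by (simp add: add.commute)

lemma ell_pos: "0 < ell P a b"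
  unfolding ell_eq using rho1_pos rho0_pos by (simp add: Beta_real_pos)

lemma ell_le_1: "ell P a b \<le> 1"
  unfolding ell_eq using rho1_pos rho0_pos Beta_plus_nat_le Beta_real_pos by simp

lemma ell_le_ell_mult: "ell P a b \<le> ell P a 0 * ell P 0 b"
  unfolding ell_eq using Beta_plus_nat_supermodular[OF rho1_pos rho0_pos, of a b]
    Beta_real_pos[OF rho1_pos rho0_pos]
  by (simp add: field_simps)

lemma ell_mult_le_left: "c \<le> a + b \<Longrightarrow> ell P a 0 * ell P b 0 \<le> ell P c 0"
  unfolding ell_eq using Beta_plus_nat_mult_le[OF rho1_pos rho0_pos, of c a b]
    Beta_real_pos[OF rho1_pos rho0_pos]
  by (simp add: field_simps)

lemma ell_mult_le_right: "c \<le> a + b \<Longrightarrow> ell P 0 a * ell P 0 b \<le> ell P 0 c"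
  unfolding ell_eq using Beta_plus_nat_mult_le[OF rho0_pos rho1_pos, of c a b]
    Beta_real_pos[OF rho1_pos rho0_pos]
  by (simp add: field_simps Beta_commute)

lemma psplit_pos: "0 < psplit P d"
  unfolding psplit_def using alpha_pos by simp

lemma psplit_less_1: "psplit P d < 1"
proof -
  have "1 \<le> (1 + real d) powr beta P"
    using beta_nonneg by (intro ge_one_powr_ge_zero) auto
  then have "(1 + real d) powr (- beta P) \<le> 1"
    by (simp add: powr_minus_divide)
  then show ?thesis
    unfolding psplit_def using alpha_pos alpha_less_1
    by (smt (verit) mult_left_le powr_ge_zero)
qed

lemma pleaf_pos: "0 < pleaf P d I"
  unfolding pleaf_def using psplit_less_1 by simp

lemma pleaf_le_1: "pleaf P d I \<le> 1"
  unfolding pleaf_def using psplit_pos by (simp add: less_imp_le)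

lemma pinner_pos: "f \<in> Vf P I \<Longrightarrow> 0 < pinner P d I"
  unfolding pinner_def using psplit_pos Vf_finite[of P I] by (auto simp: card_gt_0_iff)

lemma pinner_le_psplit: "f \<in> Vf P I \<Longrightarrow> pinner P d I \<le> psplit P d"
  unfolding pinner_def using psplit_pos Vf_finite[of P I]
  by (auto simp: divide_le_eq card_gt_0_iff Suc_leI)

lemma ecost_leaf:
  "ecost P (ORn I d) (TRn I d) = ereal (- ln (pleaf P d I) - ln (ell P (cnt P True I) (cnt P False I)))"
  by (simp add: elog_pos pleaf_pos ell_pos)

lemma ecost_split: "f \<in> Vf P I \<Longrightarrow> ecost P (ORn I d) (ANDn I d f) = ereal (- ln (pinner P d I))"
  by (simp add: elog_pos pinner_pos)

lemma pure_cost_nonneg: "0 \<le> pure_cost P I"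
  unfolding pure_cost_def using ell_pos ell_le_1 by (smt (verit) ln_le_zero_iff)

lemma pure_cost_le_leaf: "pure_cost P I \<le> - ln (ell P (cnt P True I) (cnt P False I))"
proof -
  let ?a = "cnt P True I" and ?b = "cnt P False I"
  have "ln (ell P ?a ?b) \<le> ln (ell P ?a 0 * ell P 0 ?b)"
    using ell_le_ell_mult ell_pos by (simp add: mult_pos_pos)
  then show ?thesis unfolding pure_cost_def using ell_pos by (simp add: ln_mult_pos)
qed

lemma pure_cost_subadditive:
  "pure_cost P I \<le> pure_cost P (restr P I f False) + pure_cost P (restr P I f True)"
proof -
  let ?I0 = "restr P I f False" and ?I1 = "restr P I f True"
  have "ln (ell P (cnt P True ?I0) 0 * ell P (cnt P True ?I1) 0) \<le> ln (ell P (cnt P True I) 0)"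
    using ell_mult_le_left[OF cnt_le_restr] ell_pos by (simp add: mult_pos_pos)
  moreover have "ln (ell P 0 (cnt P False ?I0) * ell P 0 (cnt P False ?I1)) \<le> ln (ell P 0 (cnt P False I))"
    using ell_mult_le_right[OF cnt_le_restr] ell_pos by (simp add: mult_pos_pos)
  ultimately show ?thesis unfolding pure_cost_def using ell_pos by (simp add: ln_mult_pos)
qed

lemma hh_ORn:
  "hh P (ORn I d) =
     ereal (min (- ln (ell P (cnt P True I) (cnt P False I))) (- ln (psplit P d) + pure_cost P I))"
  by (simp add: elog_pos ell_pos psplit_pos pure_cost_def max_def min_def)

lemma pure_cost_le_hh: "ereal (pure_cost P I) \<le> hh P (ORn I d)"
proof -
  have "0 \<le> - ln (psplit P d)"
    using psplit_pos psplit_less_1 by (simp add: less_imp_le)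
  then show ?thesis unfolding hh_ORn using pure_cost_le_leaf by simp
qed

lemma hh_le_opt_cost: "hh P u \<le> opt_cost P u"
proof (induction "nF P - depth u" arbitrary: u rule: less_induct)
  case less
  show ?case
  proof (cases u)
    case (ORn I d)
    have leaf: "hh P u \<le> ecost P (ORn I d) (TRn I d)"
    proof -
      have "0 \<le> - ln (pleaf P d I)" using pleaf_pos pleaf_le_1 by simp
      then show ?thesis unfolding ORn hh_ORn ecost_leaf by (simp add: min_le_iff_disj)
    qed
    have split: "hh P u \<le> ecost P (ORn I d) (ANDn I d f) +
        (opt_cost P (ORn (restr P I f False) (Suc d)) + opt_cost P (ORn (restr P I f True) (Suc d)))"
      if "d < nF P" "f \<in> Vf P I" for f
    proof -
      have "ln (pinner P d I) \<le> ln (psplit P d)"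
        using pinner_pos[OF that(2), of d] pinner_le_psplit[OF that(2), of d] by simp
      then have "hh P u \<le> ereal (- ln (pinner P d I)) +
          (ereal (pure_cost P (restr P I f False)) + ereal (pure_cost P (restr P I f True)))"
        unfolding ORn hh_ORn using pure_cost_subadditive[of I f] by (simp add: min_le_iff_disj)
      also have "\<dots> \<le> ecost P (ORn I d) (ANDn I d f) +
          (opt_cost P (ORn (restr P I f False) (Suc d)) + opt_cost P (ORn (restr P I f True) (Suc d)))"
        unfolding ecost_split[OF that(2)] using that(1) ORn
        by (intro add_mono order_refl order_trans[OF pure_cost_le_hh less]) auto
      finally show ?thesis .
    qed
    show ?thesis
      unfolding ORn opt_cost.simps(1)[of P I d]
      using leaf split by (auto intro: INF_greatest simp: ORn)
  qed simp_all
qed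

lemma opt_cost_nonneg: "0 \<le> opt_cost P u"
proof (cases u)
  case (ORn I d)
  then show ?thesis
    using pure_cost_nonneg pure_cost_le_hh hh_le_opt_cost by (meson ereal_less_eq(5) order_trans)
qed simp_all

end

section \<open>Invariants of the search\<close>

lemma propL_ub: "propL P s Q s' \<Longrightarrow> ub s' = ub s"
  by (induction rule: propL.induct) auto

lemma propU_lb: "propU P s Q s' \<Longrightarrow> lb s' = lb s"
  by (induction rule: propU.induct) auto

lemma propL_lb_le:
  assumes "propL P s Q s'" and "\<And>u. backup P v u \<le> v u" and "\<And>u. lb s u \<le> v u"
  shows "lb s' u \<le> v u"
  using assms(1,3)
proof (induction rule: propL.induct)
  case (upd x Q s s')
  have "valL P s x \<le> v x"
    unfolding valL_eq_backup using backup_mono[OF upd.prems] assms(2) by (rule order_trans)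
  then show ?case using upd.prems by (intro upd.IH) auto
qed

lemma propU_backup_le:
  assumes "propU P s Q s'" and "\<And>u. backup P (ub s) u \<le> ub s u"
  shows "backup P (ub s') u \<le> ub s' u"
  using assms
proof (induction rule: propU.induct)
  case (upd x Q s s')
  let ?s1 = "if valU P s x < ub s x then s\<lparr>ub := (ub s)(x := valU P s x)\<rparr> else s"
  have decreased: "ub ?s1 w \<le> ub s w" for w by auto
  have "backup P (ub ?s1) w \<le> ub ?s1 w" for w
  proof -
    have "backup P (ub ?s1) w \<le> backup P (ub s) w" by (rule backup_mono[OF decreased])
    also have "\<dots> \<le> ub ?s1 w" using upd.prems[of w] by (auto simp: valU_eq_backup)
    finally show ?thesis .
  qed
  then show ?case by (rule upd.IH)
qed

definition bounds_valid :: "inst \<Rightarrow> st \<Rightarrow> bool" where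
  "bounds_valid P s \<longleftrightarrow>
     (\<forall>u. lb s u \<le> opt_cost P u) \<and> (\<forall>u. backup P (ub s) u \<le> ub s u)"

context maptree_params
begin

lemma bounds_valid_init: "bounds_valid P (init P)"
  unfolding bounds_valid_def init_def using hh_le_opt_cost opt_cost_nonneg by auto

lemma bounds_valid_expand: "bounds_valid P s \<Longrightarrow> bounds_valid P (expand P s u)"
  unfolding bounds_valid_def expand_def using hh_le_opt_cost by auto

lemma bounds_valid_iter: "maptree_iter P s s' \<Longrightarrow> bounds_valid P s \<Longrightarrow> bounds_valid P s'"
proof (induction rule: maptree_iter.induct)
  case (1 s u s2 s3)
  have valid: "bounds_valid P (expand P s u)" using bounds_valid_expand[OF "1.prems"] .
  have "lb s2 x \<le> opt_cost P x" for x
    using propL_lb_le[OF "1.hyps"(3) opt_cost_backup[symmetric, THEN eq_refl]] valid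
    unfolding bounds_valid_def by blast
  moreover have "backup P (ub s2) x \<le> ub s2 x" for x
    using valid propL_ub[OF "1.hyps"(3)] unfolding bounds_valid_def by simp
  ultimately show ?case
    using propU_lb[OF "1.hyps"(4)] propU_backup_le[OF "1.hyps"(4)] unfolding bounds_valid_def by simp
qed

lemma bounds_valid_reachable: "(maptree_iter P)\<^sup>*\<^sup>* (init P) s \<Longrightarrow> bounds_valid P s"
  by (induction rule: rtranclp_induct) (auto intro: bounds_valid_init bounds_valid_iter)

end

theorem theorem10:
  fixes P :: inst and s :: st and S :: "node set"
  assumes "rho1 P > 0" and "rho0 P > 0"
    and "0 < alpha P" and "alpha P < 1" and "beta P \<ge> 0"
    and "(maptree_iter P)\<^sup>*\<^sup>* (init P) s"
    and "\<not> (lb s (root P) < ub s (root P))"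
    and "getsol P s (root P) S"
  shows "is_min_sol P S"
proof -
  interpret maptree_params P
    using assms(1-5) by unfold_locales
  have valid: "bounds_valid P s"
    using assms(6) by (rule bounds_valid_reachable)
  have "sol_cost P S \<le> backup P (ub s) (root P)"
    using getsol_cost_le_backup[OF assms(8)] valid unfolding bounds_valid_def by blast
  also have "\<dots> \<le> ub s (root P)"
    using valid unfolding bounds_valid_def by blast
  also have "\<dots> \<le> lb s (root P)"
    using assms(7) by simp
  also have "\<dots> \<le> opt_cost P (root P)"
    using valid unfolding bounds_valid_def by blast
  finally have "sol_cost P S \<le> opt_cost P (root P)" .
  moreover have "opt_cost P (root P) \<le> sol_cost P S'" if "is_sol P S'" for S'
    using that by (simp add: is_sol_iff_sol_tree opt_cost_le_sol_cost)
  moreover have "is_sol P S"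
    using getsol_sol_tree[OF assms(8)] by (simp add: is_sol_iff_sol_tree)
  ultimately show ?thesis
    unfolding is_min_sol_def by (blast intro: order_trans)
qed

end
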